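(* Let $k\in\mathbb{N}$. For any three polygonal curves $\sigma$, $\tau$, $\upsilon$ in $\mathbb{R}^d$ (of arbitrary, possibly different, complexities) it holds that $$d_{k\text{-}DTW}(\sigma,\tau)\le k\cdot\big(d_{k\text{-}DTW}(\sigma,\upsilon)+d_{k\text{-}DTW}(\upsilon,\tau)\big).$$ This bound is tight, i.e., there exist curves $\sigma,\tau,\upsilon$ for which equality holds. Further, there is no constant $c>0$ independent of $k$ and of the complexities of the curves such that $d_{k\text{-}DTW}(\sigma,\tau)\le c\cdot\big(d_{k\text{-}DTW}(\sigma,\upsilon)+d_{k\text{-}DTW}(\upsilon,\tau)\big)$ holds for all triples of curves.
   Context: A polygonal curve of complexity $m$ in $\mathbb{R}^d$ is identified with its sequence of vertices $(w_1,\dots,w_m)$, $w_i\in\mathbb{R}^d$. For curves $\sigma=(v_1,\dots,v_{m'})$ and $\tau=(w_1,\dots,w_{m''})$, a traversal $T$ is a sequence of index pairs $(i,j)$ that starts with $(1,1)$, ends with $(m',m'')$, and in which each pair $(i,j)$ is followed only by $(i+1,j)$, $(i,j+1)$ or $(i+1,j+1)$; $\mathcal{T}$ denotes the set of all traversals. For a traversal $T$ let $s^{(T)}_1\ge s^{(T)}_2\ge\dots\ge s^{(T)}_{|T|}$ be the Euclidean distances $\|v_i-w_j\|$ over the pairs $(i,j)\in T$ sorted non-increasingly, and set $s^{(T)}_l=0$ for $l>|T|$. The $k$-DTW distance is $d_{k\text{-}DTW}(\sigma,\tau)=\min_{T\in\mathcal{T}}\sum_{l=1}^k s^{(T)}_l$.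 *)

theory Defs
  imports "HOL-Analysis.Analysis"
begin

text \<open>A polygonal curve of complexity m is the list of its m vertices (m = length, m >= 1).
  Indices of traversals are 1-based, as in the paper.\<close>

definition traversals :: "nat \<Rightarrow> nat \<Rightarrow> (nat \<times> nat) list set" where
  "traversals m1 m2 = {T. T \<noteq> [] \<and> hd T = (1, 1) \<and> last T = (m1, m2) \<and>
      (\<forall>l. Suc l < length T \<longrightarrow>
         T ! Suc l \<in> {(Suc (fst (T ! l)), snd (T ! l)),
                      (fst (T ! l), Suc (snd (T ! l))),
                      (Suc (fst (T ! l)), Suc (snd (T ! l)))})}"

text \<open>Sum of the k largest distances along a traversal (missing entries count as 0).\<close>
definition ktrav_cost :: "nat \<Rightarrow> 'a::euclidean_space list \<Rightarrow> 'a list \<Rightarrow> (nat \<times> nat) list \<Rightarrow> real" where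
  "ktrav_cost k \<sigma> \<tau> T =
     sum_list (take k (rev (sort (map (\<lambda>(i, j). dist (\<sigma> ! (i - 1)) (\<tau> ! (j - 1))) T))))"

definition kDTW :: "nat \<Rightarrow> 'a::euclidean_space list \<Rightarrow> 'a list \<Rightarrow> real" where
  "kDTW k \<sigma> \<tau> = Min (ktrav_cost k \<sigma> \<tau> ` traversals (length \<sigma>) (length \<tau>))"

end

(*
  Glue optimal traversals T1 of (sigma, upsilon) and T2 of (upsilon, tau) along the shared curve
  upsilon: walking both in lockstep on the middle index gives a traversal T of (sigma, tau) each
  of whose pairs (a, b) factors as (a, c) in T1 and (c, b) in T2. By the triangle inequality every
  distance on T is at most the largest distance on T1 plus the largest on T2, which for k >= 1 is
  at most kDTW(sigma, upsilon) + kDTW(upsilon, tau); a sum of k such distances is at most k times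
  that.

  For sigma = [0], upsilon = [e] and tau = e repeated k times, with |e| = 1, every traversal of
  (sigma, tau) has k pairs at distance 1, while kDTW(sigma, upsilon) = 1 and
  kDTW(upsilon, tau) = 0. Taking k larger than c refutes any uniform constant c.
*)
theory Submission
  imports Defs
begin

definition grid_step :: "nat \<times> nat \<Rightarrow> nat \<times> nat \<Rightarrow> bool" where
  "grid_step p q \<longleftrightarrow>
     q \<in> {(Suc (fst p), snd p), (fst p, Suc (snd p)), (Suc (fst p), Suc (snd p))}"

definition warping_path :: "nat \<times> nat \<Rightarrow> nat \<times> nat \<Rightarrow> (nat \<times> nat) list \<Rightarrow> bool" where
  "warping_path p q T \<longleftrightarrow> T \<noteq> [] \<and> hd T = p \<and> last T = q \<and> successively grid_step T"

lemma traversals_eq_warping_paths: "traversals m1 m2 = {T. warping_path (1, 1) (m1, m2) T}"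
  unfolding traversals_def warping_path_def successively_conv_nth grid_step_def by auto

lemma warping_path_Cons_iff:
  "warping_path p q (x # T) \<longleftrightarrow>
     x = p \<and> (if T = [] then p = q else grid_step p (hd T) \<and> warping_path (hd T) q T)"
  by (auto simp: warping_path_def successively_Cons)

lemma warping_path_singleton: "warping_path p p [p]"
  by (simp add: warping_path_Cons_iff)

lemma warping_path_ConsI: "grid_step p p' \<Longrightarrow> warping_path p' q T \<Longrightarrow> warping_path p q (p # T)"
  by (auto simp: warping_path_def successively_Cons)

(* \<le> on nat \<times> nat is the componentwise order of HOL-Library.Product_Order. *)
lemma warping_path_bounds: "warping_path p q T \<Longrightarrow> x \<in> set T \<Longrightarrow> p \<le> x \<and> x \<le> q"
proof (induction T arbitrary: p x)
  case (Cons y T)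
  show ?case
  proof (cases "T = []")
    case False
    with Cons.prems have step: "grid_step p (hd T)" and path: "warping_path (hd T) q T"
      by (auto simp: warping_path_Cons_iff)
    have "p \<le> hd T"
      using step by (auto simp: grid_step_def less_eq_prod_def)
    moreover have "hd T \<le> q"
      using Cons.IH[OF path, of "hd T"] False by simp
    ultimately show ?thesis
      using Cons.IH[OF path, of x] Cons.prems by (auto simp: warping_path_Cons_iff intro: order_trans)
  qed (use Cons.prems in \<open>auto simp: warping_path_Cons_iff\<close>)
qed simp

lemma warping_path_length_le:
  "warping_path p q T \<Longrightarrow> fst p + snd p + length T \<le> fst q + snd q + 1"
proof (induction T arbitrary: p)
  case (Cons y T)
  then show ?case
    by (cases "T = []") (auto simp: warping_path_Cons_iff grid_step_def dest!: Cons.IH)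
qed (simp add: warping_path_def)

lemma warping_path_length_ge: "warping_path p q T \<Longrightarrow> snd q < snd p + length T"
proof (induction T arbitrary: p)
  case (Cons y T)
  then show ?case
    by (cases "T = []") (auto simp: warping_path_Cons_iff grid_step_def dest!: Cons.IH)
qed (simp add: warping_path_def)

lemma warping_path_exists: "p \<le> q \<Longrightarrow> \<exists>T. warping_path p q T"
proof (induction "fst q - fst p + (snd q - snd p)" arbitrary: p)
  case 0
  then show ?case
    using warping_path_singleton by (metis antisym diff_is_0_eq less_eq_prod_def add_is_0 prod_eq_iff)
next
  case (Suc n)
  define p' where "p' = (if fst p < fst q then (Suc (fst p), snd p) else (fst p, Suc (snd p)))"
  have "grid_step p p'" "p' \<le> q" "n = fst q - fst p' + (snd q - snd p')"
    using Suc.hyps(2) Suc.prems by (auto simp: p'_def grid_step_def less_eq_prod_def)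
  then show ?case
    using Suc.hyps(1) warping_path_ConsI by blast
qed

lemma warping_path_prepend:
  assumes "warping_path (i', j') q T" "i' \<in> {i, Suc i}" "j' \<in> {j, Suc j}"
  obtains T' where "warping_path (i, j) q T'" "set T' \<subseteq> insert (i, j) (set T)"
proof (cases "(i', j') = (i, j)")
  case True
  with assms(1) that show ?thesis by blast
next
  case False
  with assms have "warping_path (i, j) q ((i, j) # T)"
    by (intro warping_path_ConsI[of _ "(i', j')"]) (auto simp: grid_step_def)
  with that show ?thesis by fastforce
qed

lemma warping_path_start_le_end: "warping_path p q T \<Longrightarrow> p \<le> q"
  by (metis hd_in_set warping_path_bounds warping_path_def)

lemma warping_path_tl:
  "warping_path p q T \<Longrightarrow> tl T \<noteq> [] \<Longrightarrow> grid_step p (hd (tl T)) \<and> warping_path (hd (tl T)) q (tl T)"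
  by (cases T) (auto simp: warping_path_Cons_iff)

lemma warping_path_tl_Nil: "warping_path p q T \<Longrightarrow> tl T = [] \<Longrightarrow> T = [p] \<and> p = q"
  by (cases T) (auto simp: warping_path_Cons_iff warping_path_def)

lemma warping_paths_synchronized_step:
  assumes path1: "warping_path (i, l) (m1, m2) T1" and path2: "warping_path (l, j) (m2, m3) T2"
    and "tl T1 \<noteq> [] \<or> tl T2 \<noteq> []"
  obtains i' l' j' V1 V2 where "V1 \<in> {T1, tl T1}" "V2 \<in> {T2, tl T2}"
    "length V1 + length V2 < length T1 + length T2"
    "warping_path (i', l') (m1, m2) V1" "warping_path (l', j') (m2, m3) V2"
    "i' \<in> {i, Suc i}" "j' \<in> {j, Suc j}"
proof -
  \<comment> \<open>Advance a path whose next step keeps the shared index l; if neither can, both move to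
    Suc l. A finished path sits at l = m2, which the other path then cannot pass.\<close>
  have len: "length (tl T1) < length T1" "length (tl T2) < length T2"
    using path1 path2 by (auto simp: warping_path_def)
  consider (left) "tl T1 \<noteq> []" "snd (hd (tl T1)) = l"
    | (right) "tl T2 \<noteq> []" "fst (hd (tl T2)) = l"
    | (both) "tl T1 \<noteq> []" "tl T2 \<noteq> []" "snd (hd (tl T1)) = Suc l" "fst (hd (tl T2)) = Suc l"
  proof -
    have "snd (hd (tl T1)) \<in> {l, Suc l}" if "tl T1 \<noteq> []"
      using warping_path_tl[OF path1 that] by (auto simp: grid_step_def)
    moreover have "fst (hd (tl T2)) \<in> {l, Suc l}" if "tl T2 \<noteq> []"
      using warping_path_tl[OF path2 that] by (auto simp: grid_step_def)
    moreover have "snd (hd (tl T1)) \<le> l" if "tl T1 \<noteq> []" "tl T2 = []"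
      using warping_path_start_le_end[OF conjunct2[OF warping_path_tl[OF path1 that(1)]]]
        warping_path_tl_Nil[OF path2 that(2)] by (auto simp: less_eq_prod_def)
    moreover have "fst (hd (tl T2)) \<le> l" if "tl T2 \<noteq> []" "tl T1 = []"
      using warping_path_start_le_end[OF conjunct2[OF warping_path_tl[OF path2 that(1)]]]
        warping_path_tl_Nil[OF path1 that(2)] by (auto simp: less_eq_prod_def)
    ultimately show thesis
      using that assms(3) by fastforce
  qed
  then show thesis
  proof cases
    case left
    have "hd (tl T1) = (Suc i, l)"
      using warping_path_tl[OF path1 left(1)] left(2) by (cases "hd (tl T1)") (auto simp: grid_step_def)
    then have "warping_path (Suc i, l) (m1, m2) (tl T1)"
      using warping_path_tl[OF path1 left(1)] by simp
    then show thesis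
      using that[of "tl T1" T2 "Suc i" l j] path2 len by simp
  next
    case right
    have "hd (tl T2) = (l, Suc j)"
      using warping_path_tl[OF path2 right(1)] right(2) by (cases "hd (tl T2)") (auto simp: grid_step_def)
    then have "warping_path (l, Suc j) (m2, m3) (tl T2)"
      using warping_path_tl[OF path2 right(1)] by simp
    then show thesis
      using that[of T1 "tl T2" i l "Suc j"] path1 len by simp
  next
    case both
    define i' where "i' = fst (hd (tl T1))"
    define j' where "j' = snd (hd (tl T2))"
    have hd1: "hd (tl T1) = (i', Suc l)" and hd2: "hd (tl T2) = (Suc l, j')"
      using both(3,4) by (simp_all add: i'_def j'_def prod_eq_iff)
    have "warping_path (i', Suc l) (m1, m2) (tl T1)" "warping_path (Suc l, j') (m2, m3) (tl T2)"
      using warping_path_tl[OF path1 both(1)] warping_path_tl[OF path2 both(2)] hd1 hd2 by simp_all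
    moreover have "i' \<in> {i, Suc i}" "j' \<in> {j, Suc j}"
      using warping_path_tl[OF path1 both(1)] warping_path_tl[OF path2 both(2)] hd1 hd2
      by (auto simp: grid_step_def)
    ultimately show thesis
      using that[of "tl T1" "tl T2" i' "Suc l" j'] len by simp
  qed
qed

lemma warping_path_relcomp:
  assumes "warping_path (i, l) (m1, m2) T1" "warping_path (l, j) (m2, m3) T2"
  shows "\<exists>T. warping_path (i, j) (m1, m3) T \<and> set T \<subseteq> set T1 O set T2"
  using assms
proof (induction "length T1 + length T2" arbitrary: T1 T2 i l j rule: less_induct)
  case less
  have start: "(i, j) \<in> set T1 O set T2"
    using less.prems by (metis hd_in_set relcomp.relcompI warping_path_def)
  show ?case
  proof (cases "tl T1 \<noteq> [] \<or> tl T2 \<noteq> []")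
    case True
    then obtain i' l' j' V1 V2 where V: "V1 \<in> {T1, tl T1}" "V2 \<in> {T2, tl T2}"
        "length V1 + length V2 < length T1 + length T2"
        "warping_path (i', l') (m1, m2) V1" "warping_path (l', j') (m2, m3) V2"
        "i' \<in> {i, Suc i}" "j' \<in> {j, Suc j}"
      by (rule warping_paths_synchronized_step[OF less.prems])
    obtain T where T: "warping_path (i', j') (m1, m3) T" "set T \<subseteq> set V1 O set V2"
      using less.hyps[OF V(3-5)] by blast
    obtain T' where T': "warping_path (i, j) (m1, m3) T'" "set T' \<subseteq> insert (i, j) (set T)"
      by (rule warping_path_prepend[OF T(1) V(6,7)])
    have "set V1 \<subseteq> set T1"
      using V(1) by (cases T1) auto
    moreover have "set V2 \<subseteq> set T2"
      using V(2) by (cases T2) auto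
    ultimately have "set T' \<subseteq> set T1 O set T2"
      using T(2) T'(2) start by blast
    with T'(1) show ?thesis
      by blast
  next
    case False
    then have "(i, j) = (m1, m3)"
      using less.prems warping_path_tl_Nil by blast
    then show ?thesis
      using start warping_path_singleton[of "(i, j)"] by (metis empty_subsetI insert_subset list.set)
  qed
qed

lemma finite_traversals: "finite (traversals m1 m2)"
proof (rule finite_subset)
  show "traversals m1 m2 \<subseteq> {T. set T \<subseteq> {1..m1} \<times> {1..m2} \<and> length T \<le> m1 + m2}"
  proof
    fix T assume "T \<in> traversals m1 m2"
    then have path: "warping_path (1, 1) (m1, m2) T"
      by (simp add: traversals_eq_warping_paths)
    have "set T \<subseteq> {1..m1} \<times> {1..m2}"
      using warping_path_bounds[OF path] by (auto simp: less_eq_prod_def)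
    moreover have "length T \<le> m1 + m2"
      using warping_path_length_le[OF path] by simp
    ultimately show "T \<in> {T. set T \<subseteq> {1..m1} \<times> {1..m2} \<and> length T \<le> m1 + m2}"
      by simp
  qed
qed (simp add: finite_lists_length_le)

lemma traversals_nonempty: "m1 \<noteq> 0 \<Longrightarrow> m2 \<noteq> 0 \<Longrightarrow> traversals m1 m2 \<noteq> {}"
  using warping_path_exists[of "(1, 1)" "(m1, m2)"] by (auto simp: traversals_eq_warping_paths)

definition sum_largest :: "nat \<Rightarrow> 'a::linordered_idom list \<Rightarrow> 'a" where
  "sum_largest k xs = sum_list (take k (rev (sort xs)))"

lemma sum_largest_nonneg: "\<forall>x\<in>set xs. 0 \<le> x \<Longrightarrow> 0 \<le> sum_largest k xs"
  unfolding sum_largest_def by (intro sum_list_nonneg) (auto dest: in_set_takeD)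

lemma sum_largest_le:
  assumes "\<forall>x\<in>set xs. x \<le> M" "0 \<le> M"
  shows "sum_largest k xs \<le> of_nat k * M"
proof -
  let ?ys = "take k (rev (sort xs))"
  have "\<forall>y\<in>set ?ys. y \<le> M"
    using assms(1) by (auto dest: in_set_takeD)
  then have "sum_largest k xs \<le> (\<Sum>_\<leftarrow>?ys. M)"
    unfolding sum_largest_def using sum_list_mono[of ?ys "\<lambda>y. y" "\<lambda>_. M"] by simp
  also have "\<dots> = of_nat (length ?ys) * M"
    by (simp add: sum_list_triv)
  also have "\<dots> \<le> of_nat k * M"
    using assms(2) by (intro mult_right_mono) auto
  finally show ?thesis .
qed

lemma member_le_sum_largest:
  assumes "k \<noteq> 0" "\<forall>x\<in>set xs. 0 \<le> x" "x \<in> set xs"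
  shows "x \<le> sum_largest k xs"
proof -
  let ?ys = "rev (sort xs)"
  have x: "x \<in> set ?ys"
    using assms(3) by simp
  then obtain y ys where ys: "?ys = y # ys"
    by (cases ?ys) auto
  moreover have "sorted_wrt (\<ge>) ?ys"
    by (simp add: sorted_wrt_rev)
  ultimately have "x \<le> y"
    using x unfolding ys by auto
  also have "y \<le> sum_list (take k ?ys)"
  proof (rule member_le_sum_list)
    show "y \<in> set (take k ?ys)"
      using assms(1) ys by (simp add: take_Cons')
    show "0 \<le> z" if "z \<in> set (take k ?ys)" for z
      using that assms(2) by (auto dest: in_set_takeD)
  qed
  finally show ?thesis
    by (simp add: sum_largest_def)
qed

lemma sum_largest_const:
  assumes "\<forall>x\<in>set xs. x = c"
  shows "sum_largest k xs = of_nat (min k (length xs)) * c"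
proof -
  have "rev (sort xs) = replicate (length xs) c"
    using replicate_length_same[of "rev (sort xs)" c] assms by simp
  then show ?thesis
    by (simp add: sum_largest_def sum_list_replicate)
qed

lemma ktrav_cost_eq_sum_largest:
  "ktrav_cost k \<sigma> \<tau> T = sum_largest k (map (\<lambda>(i, j). dist (\<sigma> ! (i - 1)) (\<tau> ! (j - 1))) T)"
  by (simp add: ktrav_cost_def sum_largest_def)

lemma ktrav_cost_nonneg: "0 \<le> ktrav_cost k \<sigma> \<tau> T"
  unfolding ktrav_cost_eq_sum_largest by (rule sum_largest_nonneg) auto

lemma dist_le_ktrav_cost:
  "k \<noteq> 0 \<Longrightarrow> (i, j) \<in> set T \<Longrightarrow> dist (\<sigma> ! (i - 1)) (\<tau> ! (j - 1)) \<le> ktrav_cost k \<sigma> \<tau> T"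
  unfolding ktrav_cost_eq_sum_largest by (rule member_le_sum_largest) force+

lemma kDTW_le_ktrav_cost: "T \<in> traversals (length \<sigma>) (length \<tau>) \<Longrightarrow> kDTW k \<sigma> \<tau> \<le> ktrav_cost k \<sigma> \<tau> T"
  unfolding kDTW_def by (intro Min_le finite_imageI finite_traversals imageI)

lemma kDTW_attained:
  assumes "\<sigma> \<noteq> []" "\<tau> \<noteq> []"
  obtains T where "T \<in> traversals (length \<sigma>) (length \<tau>)" "kDTW k \<sigma> \<tau> = ktrav_cost k \<sigma> \<tau> T"
proof -
  have "kDTW k \<sigma> \<tau> \<in> ktrav_cost k \<sigma> \<tau> ` traversals (length \<sigma>) (length \<tau>)"
    unfolding kDTW_def using assms
    by (intro Min_in finite_imageI finite_traversals) (simp add: traversals_nonempty)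
  with that show thesis
    by blast
qed

theorem kDTW_weak_triangle:
  assumes "\<sigma> \<noteq> []" "\<tau> \<noteq> []" "\<upsilon> \<noteq> []"
  shows "kDTW k \<sigma> \<tau> \<le> real k * (kDTW k \<sigma> \<upsilon> + kDTW k \<upsilon> \<tau>)"
proof (cases "k = 0")
  case True
  obtain T where "kDTW k \<sigma> \<tau> = ktrav_cost k \<sigma> \<tau> T"
    using kDTW_attained[OF assms(1,2)] by metis
  with True show ?thesis
    by (simp add: ktrav_cost_def)
next
  case False
  obtain T1 where T1: "T1 \<in> traversals (length \<sigma>) (length \<upsilon>)" "kDTW k \<sigma> \<upsilon> = ktrav_cost k \<sigma> \<upsilon> T1"
    using kDTW_attained[OF assms(1,3)] by blast
  obtain T2 where T2: "T2 \<in> traversals (length \<upsilon>) (length \<tau>)" "kDTW k \<upsilon> \<tau> = ktrav_cost k \<upsilon> \<tau> T2"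
    using kDTW_attained[OF assms(3,2)] by blast
  have "warping_path (1, 1) (length \<sigma>, length \<upsilon>) T1" "warping_path (1, 1) (length \<upsilon>, length \<tau>) T2"
    using T1(1) T2(1) by (simp_all add: traversals_eq_warping_paths)
  then obtain T where T: "T \<in> traversals (length \<sigma>) (length \<tau>)" "set T \<subseteq> set T1 O set T2"
    unfolding traversals_eq_warping_paths using warping_path_relcomp by blast
  have "dist (\<sigma> ! (a - 1)) (\<tau> ! (b - 1)) \<le> kDTW k \<sigma> \<upsilon> + kDTW k \<upsilon> \<tau>" if ab: "(a, b) \<in> set T" for a b
  proof -
    obtain c where "(a, c) \<in> set T1" "(c, b) \<in> set T2"
      using T(2) ab by blast
    then show ?thesis
      using dist_triangle[of "\<sigma> ! (a - 1)" "\<tau> ! (b - 1)" "\<upsilon> ! (c - 1)"]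
        dist_le_ktrav_cost[OF False, of a c T1 \<sigma> \<upsilon>] dist_le_ktrav_cost[OF False, of c b T2 \<upsilon> \<tau>] T1(2) T2(2)
      by linarith
  qed
  moreover have "0 \<le> kDTW k \<sigma> \<upsilon> + kDTW k \<upsilon> \<tau>"
    using T1(2) T2(2) ktrav_cost_nonneg by (metis add_nonneg_nonneg)
  ultimately have "ktrav_cost k \<sigma> \<tau> T \<le> real k * (kDTW k \<sigma> \<upsilon> + kDTW k \<upsilon> \<tau>)"
    unfolding ktrav_cost_eq_sum_largest by (intro sum_largest_le) auto
  then show ?thesis
    using kDTW_le_ktrav_cost[OF T(1), of k] by linarith
qed

lemma kDTW_single_point:
  assumes "\<tau> \<noteq> []" "\<forall>y\<in>set \<tau>. dist x y = r"
  shows "kDTW k [x] \<tau> = real (min k (length \<tau>)) * r"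
proof -
  obtain T where T: "T \<in> traversals 1 (length \<tau>)" "kDTW k [x] \<tau> = ktrav_cost k [x] \<tau> T"
    using kDTW_attained[of "[x]" \<tau>] assms(1) by auto
  then have path: "warping_path (1, 1) (1, length \<tau>) T"
    by (simp add: traversals_eq_warping_paths)
  have "length T = length \<tau>"
    using warping_path_length_le[OF path] warping_path_length_ge[OF path] by simp
  moreover have "dist ([x] ! (i - 1)) (\<tau> ! (j - 1)) = r" if "(i, j) \<in> set T" for i j
    using warping_path_bounds[OF path that] assms(2) by auto
  ultimately show ?thesis
    unfolding T(2) ktrav_cost_eq_sum_largest by (subst sum_largest_const) auto
qed

lemma kDTW_weak_triangle_tight:
  assumes "k \<noteq> 0"
  obtains \<sigma> \<tau> \<upsilon> :: "'a::euclidean_space list"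
  where "\<sigma> \<noteq> []" "\<tau> \<noteq> []" "\<upsilon> \<noteq> []" "kDTW k \<sigma> \<tau> = real k" "kDTW k \<sigma> \<upsilon> + kDTW k \<upsilon> \<tau> = 1"
proof -
  obtain e :: 'a where e: "norm e = 1"
    using vector_choose_size zero_le_one by blast
  have "kDTW k [0] (replicate k e) = real k"
    using kDTW_single_point[of "replicate k e" 0 1 k] assms e by simp
  moreover have "kDTW k [0] [e] = 1"
    using kDTW_single_point[of "[e]" 0 1 k] assms e by simp
  moreover have "kDTW k [e] (replicate k e) = 0"
    using kDTW_single_point[of "replicate k e" e 0 k] assms by simp
  ultimately show thesis
    using that[of "[0]" "replicate k e" "[e]"] assms by simp
qed

lemma kDTW_weak_triangle_factor_unbounded:
  "\<exists>k (\<sigma> :: 'a::euclidean_space list) \<tau> \<upsilon>. \<sigma> \<noteq> [] \<and> \<tau> \<noteq> [] \<and> \<upsilon> \<noteq> [] \<and>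
     c * (kDTW k \<sigma> \<upsilon> + kDTW k \<upsilon> \<tau>) < kDTW k \<sigma> \<tau>"
proof -
  obtain n :: nat where "c < real (Suc n)"
    using reals_Archimedean2 less_Suc_eq of_nat_less_iff order_less_trans by metis
  moreover obtain \<sigma> \<tau> \<upsilon> :: "'a list" where "\<sigma> \<noteq> []" "\<tau> \<noteq> []" "\<upsilon> \<noteq> []"
    "kDTW (Suc n) \<sigma> \<tau> = real (Suc n)" "kDTW (Suc n) \<sigma> \<upsilon> + kDTW (Suc n) \<upsilon> \<tau> = 1"
    using kDTW_weak_triangle_tight by blast
  ultimately show ?thesis
    by (metis mult.right_neutral)
qed

theorem lemma2p3:
  shows "(\<forall>(k::nat) (\<sigma>::'a::euclidean_space list) \<tau> \<upsilon>.
            \<sigma> \<noteq> [] \<and> \<tau> \<noteq> [] \<and> \<upsilon> \<noteq> [] \<longrightarrow>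
            kDTW k \<sigma> \<tau> \<le> real k * (kDTW k \<sigma> \<upsilon> + kDTW k \<upsilon> \<tau>))
       \<and> (\<forall>k::nat. k \<ge> 1 \<longrightarrow> (\<exists>(\<sigma>::'a list) \<tau> \<upsilon>.
            \<sigma> \<noteq> [] \<and> \<tau> \<noteq> [] \<and> \<upsilon> \<noteq> [] \<and> kDTW k \<sigma> \<tau> > 0 \<and>
            kDTW k \<sigma> \<tau> = real k * (kDTW k \<sigma> \<upsilon> + kDTW k \<upsilon> \<tau>)))
       \<and> \<not> (\<exists>c::real. c > 0 \<and> (\<forall>(k::nat) (\<sigma>::'a list) \<tau> \<upsilon>.
            \<sigma> \<noteq> [] \<and> \<tau> \<noteq> [] \<and> \<upsilon> \<noteq> [] \<longrightarrow>
            kDTW k \<sigma> \<tau> \<le> c * (kDTW k \<sigma> \<upsilon> + kDTW k \<upsilon> \<tau>)))"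
proof (intro conjI allI impI notI)
  fix k :: nat and \<sigma> \<tau> \<upsilon> :: "'a list"
  assume "\<sigma> \<noteq> [] \<and> \<tau> \<noteq> [] \<and> \<upsilon> \<noteq> []"
  then show "kDTW k \<sigma> \<tau> \<le> real k * (kDTW k \<sigma> \<upsilon> + kDTW k \<upsilon> \<tau>)"
    by (intro kDTW_weak_triangle) auto
next
  fix k :: nat
  assume "k \<ge> 1"
  then obtain \<sigma> \<tau> \<upsilon> :: "'a list" where "\<sigma> \<noteq> []" "\<tau> \<noteq> []" "\<upsilon> \<noteq> []"
    "kDTW k \<sigma> \<tau> = real k" "kDTW k \<sigma> \<upsilon> + kDTW k \<upsilon> \<tau> = 1"
    using kDTW_weak_triangle_tight by (metis not_one_le_zero)
  moreover from this \<open>k \<ge> 1\<close> have "kDTW k \<sigma> \<tau> > 0"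
    by simp
  ultimately show "\<exists>(\<sigma>::'a list) \<tau> \<upsilon>. \<sigma> \<noteq> [] \<and> \<tau> \<noteq> [] \<and> \<upsilon> \<noteq> [] \<and> kDTW k \<sigma> \<tau> > 0 \<and>
      kDTW k \<sigma> \<tau> = real k * (kDTW k \<sigma> \<upsilon> + kDTW k \<upsilon> \<tau>)"
    by (metis mult.right_neutral)
next
  assume "\<exists>c>0. \<forall>k (\<sigma>::'a list) \<tau> \<upsilon>. \<sigma> \<noteq> [] \<and> \<tau> \<noteq> [] \<and> \<upsilon> \<noteq> [] \<longrightarrow>
      kDTW k \<sigma> \<tau> \<le> c * (kDTW k \<sigma> \<upsilon> + kDTW k \<upsilon> \<tau>)"
  then show False
    using kDTW_weak_triangle_factor_unbounded by (meson not_le)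
qed

end
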